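(* There exists $n_0\in\mathbb N$ such that for every $n>n_0$ the following holds. Let $r,m$ be positive integers dividing $n$ with $r>1$ and $n/m$ even. Then $(r^{n/r})^2\supseteq(m^{n/m})$.
   Context: For $k$ dividing $n$, $(k^{n/k})$ denotes the conjugacy class of $S_n$ consisting of the permutations that are products of $n/k$ disjoint $k$-cycles. For $B\subseteq S_n$, $B^2=\{xy:x,y\in B\}$. *)

theory Defs
  imports "HOL-Combinatorics.Permutations"
begin

text \<open>Permutations of S_n are modelled as functions p with p permutes {0..<n}.
  cycle_class n k is the class (k^(n/k)): permutations all of whose cycles have
  length exactly k, i.e. every point x has least period k under p.\<close>

definition cycle_class :: "nat \<Rightarrow> nat \<Rightarrow> (nat \<Rightarrow> nat) set" where
  "cycle_class n k = {p. p permutes {0..<n} \<and>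
     (\<forall>x<n. (p ^^ k) x = x \<and> (\<forall>j. 0 < j \<and> j < k \<longrightarrow> (p ^^ j) x \<noteq> x))}"

definition set_square :: "(nat \<Rightarrow> nat) set \<Rightarrow> (nat \<Rightarrow> nat) set" where
  "set_square B = {x \<circ> y | x y. x \<in> B \<and> y \<in> B}"

end

theory Submission
  imports Defs "HOL-Combinatorics.Orbits" "HOL-Combinatorics.Cycles" "HOL-Number_Theory.Cong"
begin

text \<open>A permutation lies in \<open>(k^(n/k))\<close> iff all its cycles have length \<open>k\<close>, and all such
  permutations of an \<open>n\<close>-set are conjugate. So it suffices to find, on one set of size \<open>n\<close>,
  permutations \<open>x\<close>, \<open>y\<close> with all cycles of length \<open>r\<close> and \<open>x y\<close> with all cycles of length
  \<open>m\<close>. Both are taken to be skew products over rotations of \<open>\<int>/r\<close>: \<open>x\<close> rotates by a unit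
  \<open>a\<close>, and \<open>y\<close> rotates by a unit \<open>e\<close> while acting on the fibres by permutations
  \<open>A\<^sub>0, \<dots>, A\<^sub>c\<^sub>-\<^sub>1\<close> with trivial product, where \<open>r = c f\<close>, \<open>m = f d\<close> and
  \<open>a + e \<equiv> c (mod r)\<close> (possible when \<open>c\<close> is even or \<open>r\<close> is odd). Then \<open>x y\<close> rotates by
  \<open>c\<close>; a point returns to its column after \<open>f\<close> steps, meeting exactly one \<open>A\<^sub>j\<close> on the
  way, so \<open>x y\<close> has all cycles of length \<open>f d\<close> once every \<open>A\<^sub>j\<close> has all cycles of length
  \<open>d\<close>. The parity of \<open>n / m\<close> provides the room needed to build the \<open>A\<^sub>j\<close>; when \<open>r\<close> is odd
  and divides \<open>m\<close>, a commutator of two such fibre permutations is used instead.\<close>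

section \<open>Permutations all of whose cycles have the same length\<close>

definition semiregular :: "nat \<Rightarrow> ('a \<Rightarrow> 'a) \<Rightarrow> 'a set \<Rightarrow> bool" where
  "semiregular k p S \<longleftrightarrow> p permutes S \<and> (\<forall>x\<in>S. \<forall>j. (p ^^ j) x = x \<longleftrightarrow> k dvd j)"

lemma funpow_exact_period_iff_dvd:
  assumes "0 < k"
  shows "((f ^^ k) x = x \<and> (\<forall>j. 0 < j \<and> j < k \<longrightarrow> (f ^^ j) x \<noteq> x)) \<longleftrightarrow>
         (\<forall>j. (f ^^ j) x = x \<longleftrightarrow> k dvd j)"
proof
  assume per: "(f ^^ k) x = x \<and> (\<forall>j. 0 < j \<and> j < k \<longrightarrow> (f ^^ j) x \<noteq> x)"
  show "\<forall>j. (f ^^ j) x = x \<longleftrightarrow> k dvd j"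
  proof
    fix j
    have "(f ^^ j) x = (f ^^ (j mod k)) x" using per funpow_mod_eq by metis
    moreover have "j mod k < k" using assms by simp
    ultimately show "(f ^^ j) x = x \<longleftrightarrow> k dvd j"
      using per by (cases "j mod k = 0") (auto simp: dvd_eq_mod_eq_0)
  qed
qed (auto simp: nat_dvd_not_less)

lemma cycle_class_eq_semiregular:
  assumes "0 < k"
  shows "cycle_class n k = {p. semiregular k p {0..<n}}"
  unfolding cycle_class_def semiregular_def by (simp add: funpow_exact_period_iff_dvd[OF assms] Ball_def)

lemma semiregular_permutes: "semiregular k p S \<Longrightarrow> p permutes S"
  by (simp add: semiregular_def)

lemma semiregular_funpow_eq_self_iff:
  "semiregular k p S \<Longrightarrow> x \<in> S \<Longrightarrow> (p ^^ j) x = x \<longleftrightarrow> k dvd j"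
  by (simp add: semiregular_def)

lemma semiregular_funpow_self: "semiregular k p S \<Longrightarrow> x \<in> S \<Longrightarrow> (p ^^ k) x = x"
  by (simp add: semiregular_def)

lemma funpow_permutes_in: "p permutes S \<Longrightarrow> x \<in> S \<Longrightarrow> (p ^^ j) x \<in> S"
  by (simp add: permutes_funpow permutes_in_image)

lemma semiregular_funpow_eq_iff:
  assumes p: "semiregular k p S" and x: "x \<in> S"
  shows "(p ^^ i) x = (p ^^ j) x \<longleftrightarrow> i mod k = j mod k"
proof -
  have le: "(p ^^ i) x = (p ^^ j) x \<longleftrightarrow> i mod k = j mod k" if "i \<le> j" for i j
  proof -
    have "(p ^^ j) x = (p ^^ (j - i)) ((p ^^ i) x)"
      using that by (metis funpow_add comp_apply le_add_diff_inverse2)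
    moreover have "(p ^^ i) x \<in> S"
      using funpow_permutes_in[OF semiregular_permutes[OF p] x] .
    ultimately show ?thesis
      using semiregular_funpow_eq_self_iff[OF p] mod_eq_dvd_iff_nat[OF that] by metis
  qed
  show ?thesis using le[of i j] le[of j i] by (cases "i \<le> j") auto
qed

lemma semiregular_funpow:
  assumes p: "semiregular k p S" and u: "coprime u k"
  shows "semiregular k (p ^^ u) S"
proof -
  have "k dvd u * j \<longleftrightarrow> k dvd j" for j
    using u by (simp add: coprime_commute[of u k] coprime_dvd_mult_right_iff)
  then show ?thesis
    using p permutes_funpow[OF semiregular_permutes[OF p]] by (simp add: semiregular_def funpow_mult)
qed

lemma semiregular_bij_conj:
  assumes p: "semiregular k p A" and h: "bij_betw h A A'" and q: "q permutes A'"
    and conj: "\<And>x. x \<in> A \<Longrightarrow> q (h x) = h (p x)"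
  shows "semiregular k q A'"
  unfolding semiregular_def
proof (intro conjI ballI allI)
  fix z j assume "z \<in> A'"
  then obtain x where x: "x \<in> A" "z = h x" using h by (auto simp: bij_betw_def)
  have "(q ^^ j) (h x) = h ((p ^^ j) x)"
    by (induct j) (simp_all add: conj funpow_permutes_in[OF semiregular_permutes[OF p] x(1)])
  moreover have "(p ^^ j) x \<in> A" using funpow_permutes_in[OF semiregular_permutes[OF p] x(1)] .
  moreover have "inj_on h A" using h by (simp add: bij_betw_def)
  ultimately have "(q ^^ j) z = z \<longleftrightarrow> (p ^^ j) x = x"
    using x by (simp add: inj_on_eq_iff)
  then show "(q ^^ j) z = z \<longleftrightarrow> k dvd j"
    using semiregular_funpow_eq_self_iff[OF p x(1)] by simp
qed fact

lemma semiregular_1I: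
  assumes "p permutes S" "\<And>x. x \<in> S \<Longrightarrow> p x = x"
  shows "semiregular 1 p S"
proof -
  have "(p ^^ j) x = x" if "x \<in> S" for x j
    using that assms(2) by (induct j) auto
  then show ?thesis using assms(1) by (simp add: semiregular_def)
qed

lemma orbit_eq_if_in_orbit: "permutation p \<Longrightarrow> y \<in> orbit p x \<Longrightarrow> orbit p y = orbit p x"
  by (rule orbit_cyclic_eq3[OF cyclic_on_orbit'])

lemma orbit_transversal:
  assumes p: "permutation p" and closed: "\<And>x. x \<in> S \<Longrightarrow> orbit p x \<subseteq> S"
  obtains R where "R \<subseteq> S" "\<And>x. x \<in> S \<Longrightarrow> \<exists>!y. y \<in> R \<and> orbit p y = orbit p x"
proof -
  define rep where "rep x = (SOME y. y \<in> orbit p x)" for x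
  have rep: "rep x \<in> orbit p x" for x
    unfolding rep_def using permutation_self_in_orbit[OF p] by (rule someI)
  then have orbit_rep: "orbit p (rep x) = orbit p x" for x by (rule orbit_eq_if_in_orbit[OF p])
  have "rep ` S \<subseteq> S" using rep closed by blast
  moreover have "\<exists>!y. y \<in> rep ` S \<and> orbit p y = orbit p x" if x: "x \<in> S" for x
  proof (rule ex1I[of _ "rep x"])
    fix y assume "y \<in> rep ` S \<and> orbit p y = orbit p x"
    then obtain z where "y = rep z" "orbit p z = orbit p x" using orbit_rep by auto
    then show "y = rep x" by (simp add: rep_def)
  qed (use x orbit_rep in auto)
  ultimately show thesis using that by blast
qed

lemma semiregular_orbit_representatives:
  assumes p: "semiregular k p S" and fin: "finite S" and k: "0 < k"
  obtains R where "R \<subseteq> S" "bij_betw (\<lambda>(i, y). (p ^^ i) y) ({0..<k} \<times> R) S"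
proof -
  have pS: "p permutes S" by (rule semiregular_permutes[OF p])
  have perm: "permutation p" using pS fin by (auto simp: permutation_permutes)
  obtain R where RS: "R \<subseteq> S" and R: "\<And>x. x \<in> S \<Longrightarrow> \<exists>!y. y \<in> R \<and> orbit p y = orbit p x"
    using orbit_transversal[OF perm permutes_orbit_subset[OF pS]] by blast
  have orbit_funpow: "orbit p ((p ^^ i) x) = orbit p x" for i x
    by (rule orbit_eq_if_in_orbit[OF perm funpow_in_orbit[OF permutation_self_in_orbit[OF perm]]])
  have inj: "inj_on (\<lambda>(i, y). (p ^^ i) y) ({0..<k} \<times> R)"
  proof (rule inj_onI, clarsimp)
    fix i y i' y' assume i: "i < k" "i' < k" and y: "y \<in> R" "y' \<in> R"
      and eq: "(p ^^ i) y = (p ^^ i') y'"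
    have "orbit p y' = orbit p y" using orbit_funpow[of i y] orbit_funpow[of i' y'] eq by simp
    then have "y = y'" using R[of y] y RS by blast
    moreover have "i mod k = i' mod k"
      using eq semiregular_funpow_eq_iff[OF p] y RS \<open>y = y'\<close> by blast
    ultimately show "i = i' \<and> y = y'" using i by simp
  qed
  have "S \<subseteq> (\<lambda>(i, y). (p ^^ i) y) ` ({0..<k} \<times> R)"
  proof
    fix x assume x: "x \<in> S"
    then obtain y where y: "y \<in> R" "orbit p y = orbit p x" using R by blast
    then have "x \<in> orbit p y" using permutation_self_in_orbit[OF perm, of x] by simp
    also have "orbit p y = {(p ^^ i) y | i. i < k}"
      using orbit_altdef_bounded[OF semiregular_funpow_self[OF p] k] y RS by blast
    finally show "x \<in> (\<lambda>(i, y). (p ^^ i) y) ` ({0..<k} \<times> R)" using y(1) by force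
  qed
  moreover have "(\<lambda>(i, y). (p ^^ i) y) ` ({0..<k} \<times> R) \<subseteq> S"
    using RS funpow_permutes_in[OF pS] by auto
  ultimately show ?thesis using that RS inj by (auto simp: bij_betw_def)
qed

lemma semiregular_normal_form:
  assumes p: "semiregular k p S" and fin: "finite S" and k: "0 < k"
  obtains g where "bij_betw g ({0..<k} \<times> {0..<card S div k}) S"
    "\<And>i j. i < k \<Longrightarrow> j < card S div k \<Longrightarrow> p (g (i, j)) = g (Suc i mod k, j)"
proof -
  obtain R where RS: "R \<subseteq> S" and h: "bij_betw (\<lambda>(i, y). (p ^^ i) y) ({0..<k} \<times> R) S"
    using semiregular_orbit_representatives[OF assms] .
  have "card S = k * card R"
    using bij_betw_same_card[OF h] by (simp add: card_cartesian_product)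
  then have cR: "card S div k = card R" using k by simp
  obtain e where e: "bij_betw e {0..<card R} R"
    using ex_bij_betw_nat_finite finite_subset[OF RS fin] by blast
  define g where "g = (\<lambda>(i, j). (p ^^ i) (e j))"
  have "bij_betw (map_prod id e) ({0..<k} \<times> {0..<card R}) ({0..<k} \<times> R)"
    by (rule bij_betw_map_prod[OF bij_betw_id e])
  from bij_betw_trans[OF this h] have "bij_betw g ({0..<k} \<times> {0..<card S div k}) S"
    unfolding cR g_def by (simp add: comp_def split_def map_prod_def)
  moreover have "p (g (i, j)) = g (Suc i mod k, j)" if "i < k" "j < card S div k" for i j
  proof -
    have "e j \<in> S" using e that(2) RS cR by (auto simp: bij_betw_def)
    then show ?thesis
      unfolding g_def using funpow_mod_eq[OF semiregular_funpow_self[OF p]] by simp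
  qed
  ultimately show ?thesis by (rule that)
qed

lemma semiregular_conjugate:
  assumes p: "semiregular k p S" and q: "semiregular k q T"
    and fin: "finite S" "finite T" and card: "card S = card T" and k: "0 < k"
  obtains h where "bij_betw h S T" "\<And>x. x \<in> S \<Longrightarrow> h (p x) = q (h x)"
proof -
  let ?D = "{0..<k} \<times> {0..<card S div k}"
  obtain g where g: "bij_betw g ?D S" "\<And>i j. i < k \<Longrightarrow> j < card S div k \<Longrightarrow> p (g (i, j)) = g (Suc i mod k, j)"
    using semiregular_normal_form[OF p fin(1) k] by blast
  obtain g' where g': "bij_betw g' ?D T" "\<And>i j. i < k \<Longrightarrow> j < card S div k \<Longrightarrow> q (g' (i, j)) = g' (Suc i mod k, j)"
    using semiregular_normal_form[OF q fin(2) k] card by metis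
  define h where "h = g' \<circ> inv_into ?D g"
  have h: "bij_betw h S T"
    unfolding h_def by (rule bij_betw_trans[OF bij_betw_inv_into[OF g(1)] g'(1)])
  have "h (p x) = q (h x)" if x: "x \<in> S" for x
  proof -
    obtain ij where "ij \<in> ?D" "x = g ij"
      using x g(1) by (metis bij_betw_imp_surj_on imageE)
    then obtain i j where ij: "i < k" "j < card S div k" "x = g (i, j)" by auto
    have "(Suc i mod k, j) \<in> ?D" using ij k by simp
    then show ?thesis
      using ij g g' bij_betw_inv_into_left[OF g(1)] by (simp add: h_def)
  qed
  with h show ?thesis by (rule that)
qed

definition transport :: "('a \<Rightarrow> 'b) \<Rightarrow> 'a set \<Rightarrow> ('a \<Rightarrow> 'a) \<Rightarrow> 'b \<Rightarrow> 'b" where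
  "transport h A q z = (if z \<in> h ` A then h (q (inv_into A h z)) else z)"

lemma transport_apply:
  "inj_on h A \<Longrightarrow> x \<in> A \<Longrightarrow> transport h A q (h x) = h (q x)"
  by (simp add: transport_def)

lemma transport_permutes:
  assumes h: "bij_betw h A A'" and q: "q permutes A"
  shows "transport h A q permutes A'"
proof (rule bij_imp_permutes)
  have "bij_betw (h \<circ> q \<circ> inv_into A h) A' A'"
    using bij_betw_trans[OF bij_betw_trans[OF bij_betw_inv_into[OF h] permutes_imp_bij[OF q]] h]
    by (simp add: comp_assoc)
  moreover have "bij_betw (transport h A q) A' A' = bij_betw (h \<circ> q \<circ> inv_into A h) A' A'"
    using h by (intro bij_betw_cong) (simp add: transport_def bij_betw_def)
  ultimately show "bij_betw (transport h A q) A' A'" by simp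
  show "z \<notin> A' \<Longrightarrow> transport h A q z = z" for z
    using h by (simp add: transport_def bij_betw_def)
qed

lemma cycle_class_subset_square_of_model:
  assumes fin: "finite A" and card: "card A = n" and m: "0 < m" and r: "0 < r"
    and x: "semiregular r x A" and y: "semiregular r y A" and xy: "semiregular m (x \<circ> y) A"
  shows "cycle_class n m \<subseteq> set_square (cycle_class n r)"
proof
  fix \<sigma> assume "\<sigma> \<in> cycle_class n m"
  then have \<sigma>: "semiregular m \<sigma> {0..<n}" using cycle_class_eq_semiregular[OF m] by simp
  obtain h where h: "bij_betw h A {0..<n}" and conj: "\<And>z. z \<in> A \<Longrightarrow> h ((x \<circ> y) z) = \<sigma> (h z)"
    using semiregular_conjugate[OF xy \<sigma> fin _ _ m] card by auto
  have inj: "inj_on h A" using h by (simp add: bij_betw_def)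
  let ?X = "transport h A x" and ?Y = "transport h A y"
  have X: "?X permutes {0..<n}" and Y: "?Y permutes {0..<n}"
    using transport_permutes[OF h] semiregular_permutes[OF x] semiregular_permutes[OF y] by auto
  have "\<sigma> = ?X \<circ> ?Y"
  proof
    fix z show "\<sigma> z = (?X \<circ> ?Y) z"
    proof (cases "z \<in> {0..<n}")
      case True
      then obtain w where w: "w \<in> A" "z = h w" using h by (metis bij_betw_def imageE)
      have "y w \<in> A" using semiregular_permutes[OF y] w(1) by (simp add: permutes_in_image)
      then show ?thesis using w conj transport_apply[OF inj] by simp
    next
      case False
      then show ?thesis using X Y semiregular_permutes[OF \<sigma>] by (simp add: permutes_not_in)
    qed
  qed
  moreover have "?X \<in> cycle_class n r" "?Y \<in> cycle_class n r"
    using semiregular_bij_conj[OF x h X] semiregular_bij_conj[OF y h Y] transport_apply[OF inj]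
    by (simp_all add: cycle_class_eq_semiregular[OF r])
  ultimately show "\<sigma> \<in> set_square (cycle_class n r)" unfolding set_square_def by blast
qed

section \<open>Skew products over rotations\<close>

definition skew_product :: "nat \<Rightarrow> nat \<Rightarrow> (nat \<Rightarrow> 'b \<Rightarrow> 'b) \<Rightarrow> 'b set \<Rightarrow> nat \<times> 'b \<Rightarrow> nat \<times> 'b" where
  "skew_product r t \<psi> B = (\<lambda>(i, b). if i < r \<and> b \<in> B then ((i + t) mod r, \<psi> i b) else (i, b))"

text \<open>\<open>cocycle r t \<psi> j i = \<psi> (i + (j - 1) t) \<circ> \<dots> \<circ> \<psi> (i + t) \<circ> \<psi> i\<close>, indices taken mod \<open>r\<close>:
  the action on the fibre of \<open>j\<close> steps of the skew product starting in column \<open>i\<close>.\<close>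

fun cocycle :: "nat \<Rightarrow> nat \<Rightarrow> (nat \<Rightarrow> 'b \<Rightarrow> 'b) \<Rightarrow> nat \<Rightarrow> nat \<Rightarrow> 'b \<Rightarrow> 'b" where
  "cocycle r t \<psi> 0 i = id"
| "cocycle r t \<psi> (Suc j) i = \<psi> ((i + j * t) mod r) \<circ> cocycle r t \<psi> j i"

lemma skew_product_apply [simp]:
  "i < r \<Longrightarrow> b \<in> B \<Longrightarrow> skew_product r t \<psi> B (i, b) = ((i + t) mod r, \<psi> i b)"
  by (simp add: skew_product_def)

lemma cocycle_permutes: "(\<And>i. \<psi> i permutes B) \<Longrightarrow> cocycle r t \<psi> j i permutes B"
  by (induct j) (simp_all add: permutes_compose)

lemma cocycle_add:
  "cocycle r t \<psi> (a + b) i = cocycle r t \<psi> b ((i + a * t) mod r) \<circ> cocycle r t \<psi> a i"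
  by (induct b) (simp_all add: mod_add_right_eq algebra_simps)

lemma cocycle_eq_id:
  "(\<And>l. l < j \<Longrightarrow> \<psi> ((i + l * t) mod r) = id) \<Longrightarrow> cocycle r t \<psi> j i = id"
  by (induct j) simp_all

lemma skew_product_permutes:
  assumes B: "finite B" and \<psi>: "\<And>i. \<psi> i permutes B"
  shows "skew_product r t \<psi> B permutes ({0..<r} \<times> B)"
proof (rule bij_imp_permutes)
  let ?A = "{0..<r} \<times> B"
  have "skew_product r t \<psi> B ` ?A \<subseteq> ?A"
    using \<psi> by (auto simp: permutes_in_image)
  moreover have "inj_on (skew_product r t \<psi> B) ?A"
  proof (rule inj_onI, clarsimp)
    fix i b i' b' assume i: "i < r" "i' < r" and b: "b \<in> B" "b' \<in> B"
      and eq: "(i + t) mod r = (i' + t) mod r" "\<psi> i b = \<psi> i' b'"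
    have "i = i'"
      using eq(1) i cong_add_rcancel_nat cong_less_modulus_unique_nat unfolding cong_def by blast
    then show "i = i' \<and> b = b'" using eq(2) permutes_inj[OF \<psi>] by (auto dest: injD)
  qed
  ultimately show "bij_betw (skew_product r t \<psi> B) ?A ?A"
    using B by (simp add: bij_betw_def endo_inj_surj)
qed (auto simp: skew_product_def split: if_splits)

lemma skew_product_funpow:
  assumes "i < r" "b \<in> B" "\<And>i. \<psi> i permutes B"
  shows "(skew_product r t \<psi> B ^^ j) (i, b) = ((i + j * t) mod r, cocycle r t \<psi> j i b)"
proof (induct j)
  case (Suc j)
  have "cocycle r t \<psi> j i permutes B" using assms(3) by (rule cocycle_permutes)
  then have "cocycle r t \<psi> j i b \<in> B" using assms(2) by (simp add: permutes_in_image)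
  with Suc assms(1) show ?case by (simp add: mod_add_right_eq ac_simps)
qed (use assms(1) in simp)

lemma mod_add_multiple_self:
  fixes i r x :: nat
  assumes "i < r" "r dvd x"
  shows "(i + x) mod r = i"
proof -
  from assms(2) obtain z where "x = r * z" ..
  then show ?thesis using assms(1) by simp
qed

lemma cocycle_mult:
  assumes i: "i < r" and kt: "(k * t) mod r = 0"
  shows "cocycle r t \<psi> (k * q) i = cocycle r t \<psi> k i ^^ q"
proof (induct q)
  case (Suc q)
  have "r dvd k * t * q" using kt by (simp add: mod_eq_0_iff_dvd)
  then have "r dvd k * q * t" by (simp only: ac_simps)
  then have returns: "(i + k * q * t) mod r = i" by (rule mod_add_multiple_self[OF i])
  have "cocycle r t \<psi> (k * Suc q) i = cocycle r t \<psi> (k * q + k) i"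
    by (metis mult_Suc_right add.commute)
  also have "\<dots> = cocycle r t \<psi> k ((i + k * q * t) mod r) \<circ> cocycle r t \<psi> (k * q) i"
    by (rule cocycle_add)
  finally show ?case using Suc returns by simp
qed simp

lemma cocycle_shift_conj:
  assumes i: "i < r" and kt: "(k * t) mod r = 0"
  shows "cocycle r t \<psi> k ((i + t) mod r) \<circ> \<psi> i = \<psi> i \<circ> cocycle r t \<psi> k i"
proof -
  have "(i + k * t) mod r = i"
    using kt by (intro mod_add_multiple_self[OF i]) (simp add: mod_eq_0_iff_dvd)
  then show ?thesis using cocycle_add[of r t \<psi> 1 k i] cocycle_add[of r t \<psi> k 1 i] i by simp
qed

lemma semiregular_cocycle_shift:
  assumes \<psi>: "\<And>i. \<psi> i permutes B" and i: "i < r" and kt: "(k * t) mod r = 0"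
    and base: "semiregular l (cocycle r t \<psi> k i) B"
  shows "semiregular l (cocycle r t \<psi> k ((i + j * t) mod r)) B"
proof (induct j)
  case 0
  then show ?case using base i by simp
next
  case (Suc j)
  let ?i = "(i + j * t) mod r"
  have "?i < r" using i by simp
  then have "cocycle r t \<psi> k ((?i + t) mod r) (\<psi> ?i x) = \<psi> ?i (cocycle r t \<psi> k ?i x)" for x
    using fun_cong[OF cocycle_shift_conj[OF _ kt]] by simp
  then have "semiregular l (cocycle r t \<psi> k ((?i + t) mod r)) B"
    by (rule semiregular_bij_conj[OF Suc permutes_imp_bij[OF \<psi>] cocycle_permutes[OF \<psi>]])
  moreover have "(?i + t) mod r = (i + Suc j * t) mod r"
    by (simp add: mod_add_right_eq ac_simps)
  ultimately show ?case by simp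
qed

lemma semiregular_skew_product:
  assumes B: "finite B" and \<psi>: "\<And>i. \<psi> i permutes B" and k: "0 < k"
    and order: "\<And>j. (j * t) mod r = 0 \<longleftrightarrow> k dvd j"
    and fibre: "\<And>i. i < r \<Longrightarrow> semiregular l (cocycle r t \<psi> k i) B"
  shows "semiregular (k * l) (skew_product r t \<psi> B) ({0..<r} \<times> B)"
  unfolding semiregular_def
proof (intro conjI ballI allI)
  show "skew_product r t \<psi> B permutes {0..<r} \<times> B" by (rule skew_product_permutes[OF B \<psi>])
  fix x j assume "x \<in> {0..<r} \<times> B"
  then obtain i b where x: "x = (i, b)" "i < r" "b \<in> B" by auto
  have returns: "(i + j * t) mod r = i \<longleftrightarrow> k dvd j"
    using order[of j] x(2) cong_add_lcancel_nat[of i "j * t" 0 r] by (simp add: cong_def)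
  have "(skew_product r t \<psi> B ^^ j) x = x \<longleftrightarrow> (i + j * t) mod r = i \<and> cocycle r t \<psi> j i b = b"
    using skew_product_funpow[OF x(2,3) \<psi>] x(1) by simp
  also have "\<dots> \<longleftrightarrow> k * l dvd j"
  proof (cases "k dvd j")
    case True
    then obtain q where j: "j = k * q" ..
    have "cocycle r t \<psi> j i = cocycle r t \<psi> k i ^^ q"
      using cocycle_mult[OF x(2)] order[of k] j by simp
    then show ?thesis
      using returns True semiregular_funpow_eq_self_iff[OF fibre[OF x(2)] x(3), of q] j k by simp
  next
    case False
    then show ?thesis using returns dvd_mult_left by blast
  qed
  finally show "(skew_product r t \<psi> B ^^ j) x = x \<longleftrightarrow> k * l dvd j" .
qed

lemma semiregular_skew_product_unit:
  assumes B: "finite B" and \<psi>: "\<And>i. \<psi> i permutes B" and r: "0 < r" and t: "coprime t r"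
    and base: "semiregular l (cocycle r t \<psi> r 0) B"
  shows "semiregular (r * l) (skew_product r t \<psi> B) ({0..<r} \<times> B)"
proof (rule semiregular_skew_product[OF B \<psi> r])
  show "(j * t) mod r = 0 \<longleftrightarrow> r dvd j" for j
    using t by (simp add: mod_eq_0_iff_dvd coprime_commute[of t r] coprime_dvd_mult_left_iff)
  fix i assume i: "i < r"
  obtain s where "[t * s = 1] (mod r)" using cong_solve_coprime_nat[OF t] by auto
  then have "[i * (t * s) = i * 1] (mod r)" by (rule cong_scalar_left)
  then have "(s * i * t) mod r = i" using i by (simp add: cong_def ac_simps)
  then show "semiregular l (cocycle r t \<psi> r i) B"
    using semiregular_cocycle_shift[OF \<psi> r _ base, of "s * i"] by simp
qed

lemma semiregular_skew_rotation:
  assumes "finite B" "0 < r" "coprime a r"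
  shows "semiregular r (skew_product r a (\<lambda>_. id) B) ({0..<r} \<times> B)"
proof -
  have "semiregular 1 (cocycle r a (\<lambda>_. id) r 0) B"
    using semiregular_1I[OF permutes_id, of B] by (simp add: cocycle_eq_id)
  from semiregular_skew_product_unit[OF assms(1) permutes_id assms(2,3) this] show ?thesis by simp
qed

lemma skew_rotation_comp:
  assumes \<psi>: "\<And>i. \<psi> i permutes B" and sum: "[a + e = c] (mod r)"
  shows "skew_product r a (\<lambda>_. id) B \<circ> skew_product r e \<psi> B = skew_product r c \<psi> B"
proof
  fix x
  show "(skew_product r a (\<lambda>_. id) B \<circ> skew_product r e \<psi> B) x = skew_product r c \<psi> B x"
  proof (cases "fst x < r \<and> snd x \<in> B")
    case True
    have "((fst x + e) mod r + a) mod r = (fst x + (a + e)) mod r"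
      by (simp add: mod_add_right_eq ac_simps)
    also have "\<dots> = (fst x + c) mod r"
      using sum unfolding cong_def by (metis mod_add_right_eq)
    finally have "((fst x + e) mod r + a) mod r = (fst x + c) mod r" .
    then show ?thesis
      using True permutes_in_image[OF \<psi>] by (cases x) simp
  qed (cases x, auto simp: skew_product_def)
qed

text \<open>With \<open>e'\<close> inverse to \<open>e\<close> modulo \<open>r\<close>, \<open>spread r e' K As\<close> places \<open>As j\<close> in column
  \<open>j e mod r\<close> for \<open>j < K\<close> and the identity in all other columns.\<close>

definition spread :: "nat \<Rightarrow> nat \<Rightarrow> nat \<Rightarrow> (nat \<Rightarrow> 'b \<Rightarrow> 'b) \<Rightarrow> nat \<Rightarrow> 'b \<Rightarrow> 'b" where
  "spread r e' K As i = (if (i * e') mod r < K then As ((i * e') mod r) else id)"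

fun perm_prod :: "(nat \<Rightarrow> 'b \<Rightarrow> 'b) \<Rightarrow> nat \<Rightarrow> 'b \<Rightarrow> 'b" where
  "perm_prod As 0 = id"
| "perm_prod As (Suc j) = As j \<circ> perm_prod As j"

lemma spread_permutes: "(\<And>j. j < K \<Longrightarrow> As j permutes B) \<Longrightarrow> spread r e' K As i permutes B"
  by (simp add: spread_def permutes_id)

lemma perm_prod_permutes: "(\<And>i. i < j \<Longrightarrow> As i permutes B) \<Longrightarrow> perm_prod As j permutes B"
  by (induct j) (simp_all add: permutes_compose)

lemma coprime_if_inverse_mod:
  fixes e e' r :: nat
  shows "[e * e' = 1] (mod r) \<Longrightarrow> coprime e r"
  using cong_imp_coprime[OF cong_sym] by fastforce

lemma mod_mult_inverse_cancel:
  fixes e e' r j :: nat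
  assumes "[e * e' = 1] (mod r)" "j < r"
  shows "((j * e) mod r * e') mod r = j"
  using cong_scalar_left[OF assms(1), of j] assms(2) by (simp add: cong_def mod_mult_left_eq mod_mult_right_eq ac_simps)

lemma cocycle_spread_origin:
  assumes inv: "[e * e' = 1] (mod r)" and K: "K \<le> r" and j: "j \<le> r"
  shows "cocycle r e (spread r e' K As) j 0 = perm_prod As (min j K)"
  using j
proof (induct j)
  case (Suc j)
  then have "spread r e' K As ((0 + j * e) mod r) = (if j < K then As j else id)"
    using mod_mult_inverse_cancel[OF inv] by (simp add: spread_def)
  with Suc show ?case by (auto simp: min_def)
qed simp

lemma semiregular_skew_spread_unit:
  assumes B: "finite B" and r: "0 < r" and inv: "[e * e' = 1] (mod r)" and K: "K \<le> r"
    and As: "\<And>j. j < K \<Longrightarrow> As j permutes B" and prod: "\<And>b. b \<in> B \<Longrightarrow> perm_prod As K b = b"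
  shows "semiregular r (skew_product r e (spread r e' K As) B) ({0..<r} \<times> B)"
proof -
  have "cocycle r e (spread r e' K As) r 0 = perm_prod As (min r K)"
    by (rule cocycle_spread_origin[OF inv K]) simp
  then have "cocycle r e (spread r e' K As) r 0 = perm_prod As K"
    using K by (simp add: min_def)
  then have "semiregular 1 (cocycle r e (spread r e' K As) r 0) B"
    using semiregular_1I[OF perm_prod_permutes[OF As] prod] by simp
  from semiregular_skew_product_unit[OF B spread_permutes[OF As] r coprime_if_inverse_mod[OF inv] this]
  show ?thesis by simp
qed

lemma spread_off_origin_coset:
  fixes c f r e e' j0 l :: nat
  assumes cf: "r = c * f" and inv: "[e * e' = 1] (mod r)" and j0: "j0 < c" and l: "0 < l" "l < f"
  shows "spread r e' c As (((j0 * e) mod r + l * c) mod r) = id"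
proof (rule ccontr)
  let ?q = "((j0 * e) mod r + l * c) mod r"
  let ?j = "(?q * e') mod r"
  assume "spread r e' c As ?q \<noteq> id"
  then have j: "?j < c" by (auto simp: spread_def split: if_splits)
  have q: "[?q = j0 * e + l * c] (mod r)" by (simp add: cong_def mod_add_left_eq)
  have "[?j * e = ?q * e' * e] (mod r)" by (rule cong_scalar_right) simp
  also have "?q * e' * e = ?q * (e * e')" by (simp only: mult.assoc mult.commute[of e' e])
  also have "[?q * (e * e') = ?q * 1] (mod r)" by (rule cong_scalar_left[OF inv])
  finally have je: "[?j * e = ?q] (mod r)" by simp
  have cr: "c dvd r" using cf by simp
  have "[?j * e = j0 * e + l * c] (mod c)"
    using cong_dvd_mono_modulus[OF cong_trans[OF je q] cr] .
  then have "[?j * e = j0 * e] (mod c)" by (simp add: cong_def)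
  moreover have "coprime e c" by (rule coprime_if_inverse_mod[OF cong_dvd_mono_modulus[OF inv cr]])
  ultimately have "[?j = j0] (mod c)" by (simp add: cong_mult_rcancel_nat)
  then have "?j = j0" using j j0 by (simp add: cong_less_modulus_unique_nat)
  have "[j0 * e + l * c = ?q] (mod r)" using q by (rule cong_sym)
  also have "[?q = ?j * e] (mod r)" using je by (rule cong_sym)
  also have "?j * e = j0 * e" using \<open>?j = j0\<close> by simp
  finally have "[j0 * e + l * c = j0 * e] (mod r)" .
  then have "c * f dvd c * l" using cf by (simp only: cong_add_lcancel_0_nat cong_0_iff mult.commute)
  then show False using l j0 by (auto dest: nat_dvd_not_less)
qed

lemma cocycle_spread_coset:
  assumes cf: "r = c * f" and f: "0 < f" and inv: "[e * e' = 1] (mod r)" and j0: "j0 < c"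
  shows "cocycle r c (spread r e' c As) f ((j0 * e) mod r) = As j0"
proof -
  let ?\<psi> = "spread r e' c As" and ?p = "(j0 * e) mod r"
  have "c \<le> r" using cf f by simp
  then have "j0 < r" using j0 by linarith
  then have "?\<psi> ?p = As j0" using j0 mod_mult_inverse_cancel[OF inv] by (simp add: spread_def)
  moreover have "cocycle r c ?\<psi> (f - 1) ((?p + 1 * c) mod r) = id"
  proof (rule cocycle_eq_id)
    fix l assume "l < f - 1"
    then have l: "0 < l + 1" "l + 1 < f" by auto
    have e1: "((?p + 1 * c) mod r + l * c) mod r = (?p + 1 * c + l * c) mod r"
      by (rule mod_add_left_eq)
    have e2: "?p + 1 * c + l * c = ?p + (l + 1) * c" by (simp add: algebra_simps)
    show "?\<psi> (((?p + 1 * c) mod r + l * c) mod r) = id"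
      unfolding e1 e2 by (rule spread_off_origin_coset[OF cf inv j0 l])
  qed
  ultimately show ?thesis
    using cocycle_add[of r c ?\<psi> 1 "f - 1" ?p] f by simp
qed

lemma semiregular_skew_spread:
  assumes B: "finite B" and cf: "r = c * f" and c: "0 < c" and f: "0 < f"
    and inv: "[e * e' = 1] (mod r)" and As: "\<And>j. j < c \<Longrightarrow> semiregular d (As j) B"
  shows "semiregular (f * d) (skew_product r c (spread r e' c As) B) ({0..<r} \<times> B)"
proof (rule semiregular_skew_product[OF B spread_permutes f])
  show "As j permutes B" if "j < c" for j using semiregular_permutes[OF As[OF that]] .
  show "(j * c) mod r = 0 \<longleftrightarrow> f dvd j" for j
    using cf c by (simp add: mult.commute[of j] mod_mult_mult1 dvd_eq_mod_eq_0)
  fix i assume i: "i < r"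
  let ?j0 = "(i * e') mod c"
  let ?p = "(?j0 * e) mod r"
  have j0: "?j0 < c" using c by simp
  have cr: "c dvd r" using cf by simp
  have ecc: "[e * e' = 1] (mod c)" by (rule cong_dvd_mono_modulus[OF inv cr])
  have "[?p = ?j0 * e] (mod c)" using cong_dvd_mono_modulus[OF _ cr] by simp
  also have "[?j0 * e = i * e' * e] (mod c)" by (rule cong_scalar_right) simp
  also have "i * e' * e = i * (e * e')" by (simp only: mult.assoc mult.commute[of e' e])
  also have "[i * (e * e') = i * 1] (mod c)" by (rule cong_scalar_left[OF ecc])
  also have "[i * 1 = i + r] (mod c)" using cr by (auto simp: cong_def elim!: dvdE)
  finally have "c dvd i + r - ?p"
    using cong_altdef_nat[of ?p "i + r" c] cong_sym_eq by fastforce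
  then obtain l where l: "i + r - ?p = l * c" by (metis dvdE mult.commute)
  have "?p < r" using i by simp
  then have "?p + l * c = i + r" using l by linarith
  then have "(?p + l * c) mod r = i" using i by simp
  moreover have "semiregular d (cocycle r c (spread r e' c As) f ?p) B"
    unfolding cocycle_spread_coset[OF cf f inv j0] by (rule As[OF j0])
  then have "semiregular d (cocycle r c (spread r e' c As) f ((?p + l * c) mod r)) B"
    using semiregular_cocycle_shift[OF spread_permutes[OF semiregular_permutes[OF As]] \<open>?p < r\<close>] cf
    by simp
  ultimately show "semiregular d (cocycle r c (spread r e' c As) f i) B" by simp
qed

lemma mult_pred_mod:
  fixes i r :: nat
  assumes "0 < i" "i < r"
  shows "(i * (r - 1)) mod r = r - i"
proof -
  have "i * (r - 1) = r * (i - 1) + (r - i)" using assms by (simp add: algebra_simps diff_mult_distrib2)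
  also have "\<dots> mod r = (r - i) mod r" by (rule mod_mult_self4)
  finally show ?thesis using assms by simp
qed

lemma semiregular_skew_spread_three:
  assumes B: "finite B" and r: "3 \<le> r" and As: "\<And>j. j < 3 \<Longrightarrow> As j permutes B"
    and prod: "semiregular d (As 1 \<circ> As 2 \<circ> As 0) B"
  shows "semiregular (r * d) (skew_product r 1 (spread r (r - 1) 3 As) B) ({0..<r} \<times> B)"
proof (rule semiregular_skew_product_unit[OF B spread_permutes[OF As]])
  let ?\<psi> = "spread r (r - 1) 3 As"
  show "0 < r" "coprime 1 r" using r by simp_all
  define s where "s = r - 3"
  have rs: "r = s + 3" using r by (simp add: s_def)
  have \<psi>: "?\<psi> i = (if i = 0 then As 0 else if i = s + 1 then As 2 else if i = s + 2 then As 1 else id)"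
    if "i < r" for i
    using that rs mult_pred_mod[of i r] by (cases "i = 0") (auto simp: spread_def)
  have "cocycle r 1 ?\<psi> s 1 = id"
    by (rule cocycle_eq_id) (use \<psi> rs in auto)
  then have "cocycle r 1 ?\<psi> (1 + s) 0 = As 0"
    using cocycle_add[of r 1 ?\<psi> 1 s 0] \<psi>[of 0] rs by simp
  moreover have "cocycle r 1 ?\<psi> 2 (s + 1) = As 1 \<circ> As 2"
    using \<psi>[of "s + 1"] \<psi>[of "s + 2"] rs by (simp add: numeral_2_eq_2)
  ultimately have "cocycle r 1 ?\<psi> (1 + s + 2) 0 = As 1 \<circ> As 2 \<circ> As 0"
    using cocycle_add[of r 1 ?\<psi> "1 + s" 2 0] rs by (simp add: comp_assoc)
  moreover have "1 + s + 2 = r" using rs by simp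
  ultimately show "semiregular d (cocycle r 1 ?\<psi> r 0) B" using prod by metis
qed

section \<open>Residues that are sums of two units\<close>

function coprime_part :: "nat \<Rightarrow> nat \<Rightarrow> nat" where
  "coprime_part r c = (if r = 0 \<or> gcd r c = 1 then r else coprime_part (r div gcd r c) c)"
  by auto
termination
  by (relation "measure fst") (auto intro!: div_less_dividend simp: Suc_lessI)

declare coprime_part.simps [simp del]

lemma coprime_part_spec:
  assumes "0 < r"
  shows "coprime (coprime_part r c) c \<and> (\<exists>P k. r = coprime_part r c * P \<and> P dvd c ^ k)"
  using assms
proof (induct r c rule: coprime_part.induct)
  case (1 r c)
  show ?case
  proof (cases "gcd r c = 1")
    case True
    then show ?thesis
      using 1(2) coprime_part.simps[of r c] by (auto simp: coprime_iff_gcd_eq_1 intro!: exI[of _ 1])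
  next
    case False
    let ?g = "gcd r c"
    obtain k where rk: "r = ?g * k" by (rule dvdE[OF gcd_dvd1])
    have "?g \<noteq> 0" using 1(2) by simp
    then have "r div ?g = k" by (metis rk nonzero_mult_div_cancel_left)
    moreover have "0 < k" using rk 1(2) by (cases k) auto
    ultimately have "0 < r div ?g" by simp
    then obtain P j where P: "r div ?g = coprime_part r c * P" "P dvd c ^ j"
      and cop: "coprime (coprime_part r c) c"
      using 1 False coprime_part.simps[of r c] by auto
    have "k = coprime_part r c * P" using P(1) \<open>r div ?g = k\<close> by simp
    then have "r = coprime_part r c * (?g * P)" using rk by (metis mult.left_commute)
    moreover have "?g * P dvd c ^ Suc j" using P(2) by (simp add: mult_dvd_mono)
    ultimately show ?thesis using cop by blast
  qed
qed

text \<open>Modulo a prime factor of \<open>R\<close> the number \<open>c w + R\<close> is \<open>c / 2\<close>, modulo a prime factor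
  of \<open>c\<close> it is \<open>R\<close>; neither vanishes.\<close>

lemma coprime_mult_add_odd_part:
  fixes c R w P :: int
  assumes Rc: "coprime R c" and w: "R + 1 = 2 * w" and P: "P dvd c ^ k"
  shows "coprime (c * w + R) (R * P)"
proof -
  have coprime_c: "coprime x c" if "x dvd R" for x
    using coprime_divisors[OF that dvd_refl Rc] .
  have "coprime (c * w + R) c"
  proof (rule coprimeI)
    fix x assume "x dvd c * w + R" "x dvd c"
    then have "x dvd R" by (simp add: dvd_add_right_iff)
    then show "is_unit x" by (rule coprime_common_divisor[OF Rc _ \<open>x dvd c\<close>])
  qed
  then have "coprime (c * w + R) P" using coprime_divisors[OF dvd_refl P] by simp
  moreover have "coprime (c * w + R) R"
  proof (rule coprimeI)
    fix x assume "x dvd c * w + R" "x dvd R"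
    then have "x dvd c * w" by (simp add: dvd_add_left_iff)
    then have "x dvd w" using coprime_c[OF \<open>x dvd R\<close>] by (simp add: coprime_dvd_mult_right_iff)
    then have "x dvd 2 * w - R" using \<open>x dvd R\<close> by simp
    moreover have "2 * w - R = 1" using w by linarith
    ultimately show "is_unit x" by (simp only:)
  qed
  ultimately show ?thesis by simp
qed

lemma sum_of_two_units_int:
  fixes c R P :: int
  assumes Rc: "coprime R c" and R: "odd R" and P: "P dvd c ^ k"
  shows "\<exists>a. coprime a (R * P) \<and> coprime (c - a) (R * P)"
proof -
  obtain w where w: "R + 1 = 2 * w" using R by (metis odd_even_add odd_one evenE)
  have "coprime (c * w + R) (R * P)" by (rule coprime_mult_add_odd_part[OF Rc w P])
  moreover have "coprime (c * (1 - w) + - R) (- R * P)"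
    using Rc w by (intro coprime_mult_add_odd_part[OF _ _ P]) (simp_all add: algebra_simps)
  moreover have "c * (1 - w) + - R = c - (c * w + R)" by (simp add: algebra_simps)
  ultimately show ?thesis by auto
qed

lemma sum_of_two_units:
  fixes r c :: nat
  assumes r: "0 < r" and parity: "even c \<or> odd r"
  obtains a e where "coprime a r" "coprime e r" "[a + e = c] (mod r)"
proof -
  let ?R = "coprime_part r c"
  obtain P k where P: "r = ?R * P" "P dvd c ^ k" and Rc: "coprime ?R c"
    using coprime_part_spec[OF r] by blast
  have "odd ?R"
  proof
    assume "even ?R"
    then show False
      using parity P(1) coprime_common_divisor[OF Rc, of 2] by auto
  qed
  moreover have "int P dvd int c ^ k" using P(2) by (metis of_nat_dvd_iff of_nat_power)
  ultimately have "\<exists>a. coprime a (int ?R * int P) \<and> coprime (int c - a) (int ?R * int P)"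
    using Rc by (intro sum_of_two_units_int) simp_all
  moreover have "int ?R * int P = int r" by (metis P(1) of_nat_mult)
  ultimately obtain a where a: "coprime a (int r)" "coprime (int c - a) (int r)" by auto
  let ?a = "nat (a mod int r)" and ?e = "nat ((int c - a) mod int r)"
  have "coprime ?a r" "coprime ?e r" using a r by (simp_all flip: coprime_int_iff)
  moreover have "[?a + ?e = c] (mod r)"
    using r by (simp add: cong_int_iff[symmetric] cong_def mod_add_eq)
  ultimately show thesis by (rule that)
qed

section \<open>Fibre permutations with trivial product\<close>

lemma perm_prod_cong: "(\<And>i. i < j \<Longrightarrow> As i = T i) \<Longrightarrow> perm_prod As j = perm_prod T j"
  by (induct j) simp_all

lemma funpow_pred_apply: "0 < d \<Longrightarrow> (p ^^ (d - 1)) (p x) = (p ^^ d) x"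
  using funpow_Suc_right[of "d - 1" p] by simp

lemma trivial_product_pad:
  assumes d: "0 < d" and p: "semiregular d p B" and n0: "n0 \<le> c" "even (c - n0)"
    and T: "\<And>j. j < n0 \<Longrightarrow> semiregular d (T j) B" and TP: "\<And>b. b \<in> B \<Longrightarrow> perm_prod T n0 b = b"
  obtains As where "\<And>j. j < c \<Longrightarrow> semiregular d (As j) B" "\<And>b. b \<in> B \<Longrightarrow> perm_prod As c b = b"
proof -
  define As where "As j = (if j < n0 then T j else if even (j - n0) then p else p ^^ (d - 1))" for j
  have reg: "semiregular d (As j) B" if "j < c" for j
    using T p semiregular_funpow[OF p coprime_diff_one_left_nat[OF d]] by (simp add: As_def)
  have pairs: "perm_prod As (n0 + 2 * q) b = b" if b: "b \<in> B" for b q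
  proof (induct q)
    case 0
    have "perm_prod As n0 = perm_prod T n0" by (rule perm_prod_cong) (simp add: As_def)
    then show ?case using TP[OF b] by simp
  next
    case (Suc q)
    have "perm_prod As (n0 + 2 * Suc q) b = (p ^^ (d - 1)) (p (perm_prod As (n0 + 2 * q) b))"
      by (simp add: As_def)
    then show ?case using Suc funpow_pred_apply[OF d, of p b] semiregular_funpow_self[OF p b] by simp
  qed
  from n0(2) obtain q where "c - n0 = 2 * q" by (rule evenE)
  then have "c = n0 + 2 * q" using n0(1) by simp
  with pairs have "perm_prod As c b = b" if "b \<in> B" for b using that by simp
  with reg show thesis by (rule that)
qed

lemma coprime_diff_two_left:
  fixes d :: nat
  assumes "odd d"
  shows "coprime (d - 2) d"
proof (rule coprimeI)
  fix x assume x: "x dvd d - 2" "x dvd d"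
  show "is_unit x"
  proof (cases "d = 1")
    case False
    then have "d = (d - 2) + 2" using assms by presburger
    then have "x dvd 2" using x by (metis dvd_add_right_iff)
    moreover have "odd x" using x(2) assms by (auto elim: dvdE)
    moreover have "x \<le> 2" "x \<noteq> 0" using \<open>x dvd 2\<close> by (auto dest: dvd_imp_le intro: Nat.gr0I)
    ultimately have "x = 1" by (cases "x = 2") auto
    then show ?thesis by simp
  qed (use x in simp)
qed

lemma permutes_eqI:
  assumes "f permutes S" "g permutes S" "\<And>x. x \<in> S \<Longrightarrow> f x = g x"
  shows "f = g"
proof
  fix x show "f x = g x" using assms by (cases "x \<in> S") (simp_all add: permutes_not_in)
qed

lemma perm_prod_3: "perm_prod As 3 = As 2 \<circ> As 1 \<circ> As 0"
  by (simp add: numeral_3_eq_3 numeral_2_eq_2 comp_assoc)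

lemma semiregular_rotation_partner:
  fixes C :: "'c set"
  assumes C: "finite C" and d: "0 < d" "even d"
  defines "S \<equiv> {0..<d} \<times> ({0..<2::nat} \<times> C)"
  obtains Y where "semiregular d Y S" "semiregular d (skew_product d 1 (\<lambda>_. id) ({0..<2} \<times> C) \<circ> Y) S"
proof -
  let ?B = "{0..<2::nat} \<times> C"
  have B: "finite ?B" using C by simp
  obtain f where f: "d = 2 * f" using d(2) ..
  let ?\<tau> = "skew_product 2 1 (\<lambda>_. id) C"
  let ?\<psi> = "spread d 1 2 (\<lambda>_. ?\<tau>)"
  let ?Y = "skew_product d 1 ?\<psi> ?B"
  have \<tau>: "semiregular 2 ?\<tau> ?B" by (rule semiregular_skew_rotation[OF C]) simp_all
  have inv: "[1 * 1 = 1] (mod d)" by simp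
  have "semiregular d ?Y S" unfolding S_def
  proof (rule semiregular_skew_spread_unit[OF B d(1) inv])
    show "2 \<le> d" using f d by simp
    show "?\<tau> permutes ?B" by (rule semiregular_permutes[OF \<tau>])
    show "perm_prod (\<lambda>_. ?\<tau>) 2 b = b" if "b \<in> ?B" for b
      using semiregular_funpow_self[OF \<tau> that] by (simp add: numeral_2_eq_2)
  qed
  moreover have "?\<psi> i permutes ?B" for i by (rule spread_permutes) (rule semiregular_permutes[OF \<tau>])
  then have "skew_product d 1 (\<lambda>_. id) ?B \<circ> ?Y = skew_product d (1 + 1) ?\<psi> ?B"
    by (rule skew_rotation_comp) simp
  moreover have "semiregular (f * 2) (skew_product d 2 ?\<psi> ?B) S"
    unfolding S_def using f d by (intro semiregular_skew_spread[OF B _ _ _ inv \<tau>]) simp_all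
  ultimately show thesis using that f by (simp add: mult.commute numeral_2_eq_2)
qed

lemma three_semiregular_trivial_product:
  fixes C :: "'c set"
  assumes C: "finite C" and d: "0 < d"
  defines "S \<equiv> {0..<d} \<times> ({0..<2::nat} \<times> C)"
  obtains T where "\<And>j. j < 3 \<Longrightarrow> semiregular d (T j) S" "\<And>x. x \<in> S \<Longrightarrow> perm_prod T 3 x = x"
proof -
  note result = that
  have triple: thesis if x: "semiregular d x S" and y: "semiregular d y S" and z: "semiregular d z S"
    and xyz: "\<And>s. s \<in> S \<Longrightarrow> z (y (x s)) = s" for x y z
  proof -
    let ?T = "\<lambda>j::nat. if j = 0 then x else if j = 1 then y else z"
    have "semiregular d (?T j) S" if "j < 3" for j using x y z by simp
    moreover have "perm_prod ?T 3 s = s" if "s \<in> S" for s using xyz[OF that] by (simp add: perm_prod_3)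
    ultimately show thesis by (rule result)
  qed
  let ?p = "skew_product d 1 (\<lambda>_. id) ({0..<2::nat} \<times> C)"
  have p: "semiregular d ?p S" unfolding S_def by (rule semiregular_skew_rotation) (use C d in simp_all)
  show thesis
  proof (cases "odd d")
    case True
    have "d = 1 \<or> d - 2 + 2 = d" using True d by presburger
    then have "d dvd d - 2 + 2" by auto
    moreover have "(?p ^^ (d - 2 + 2)) s = (?p ^^ (d - 2)) (?p (?p s))" for s
      by (simp only: funpow_add comp_apply numeral_2_eq_2 funpow.simps id_apply)
    ultimately have "(?p ^^ (d - 2)) (?p (?p s)) = s" if "s \<in> S" for s
      using semiregular_funpow_eq_self_iff[OF p that, of "d - 2 + 2"] by simp
    then show thesis
      using triple[OF p p semiregular_funpow[OF p coprime_diff_two_left[OF True]]] by blast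
  next
    case False
    then obtain Y where Y: "semiregular d Y S" and pY: "semiregular d (?p \<circ> Y) S"
      using semiregular_rotation_partner[OF C d] unfolding S_def by auto
    have "((?p \<circ> Y) ^^ (d - 1)) (?p (Y s)) = s" if "s \<in> S" for s
      using funpow_pred_apply[OF d, of "?p \<circ> Y" s] semiregular_funpow_self[OF pY that] by simp
    then show thesis
      using triple[OF Y p semiregular_funpow[OF pY coprime_diff_one_left_nat[OF d]]] by blast
  qed
qed

lemma layer_swap_commutator:
  fixes T :: "'c set"
  assumes T: "finite T" and g: "g permutes T" and g': "g' permutes T"
  defines "L h \<equiv> skew_product 2 0 (\<lambda>i::nat. if i = 0 then h else id) T"
    and "W \<equiv> skew_product 2 1 (\<lambda>_. id) T"
  shows "L g permutes {0..<2} \<times> T" "W permutes {0..<2} \<times> T"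
    and "L g \<circ> W \<circ> (L g' \<circ> W) = skew_product 2 0 (\<lambda>i. if i = 0 then g else g') T"
    and "(\<And>t. t \<in> T \<Longrightarrow> g (g' t) = t) \<Longrightarrow> x \<in> {0..<2} \<times> T \<Longrightarrow> (W \<circ> L g \<circ> (L g' \<circ> W)) x = x"
proof -
  have L: "L h permutes {0..<2} \<times> T" if "h permutes T" for h
    unfolding L_def using that by (intro skew_product_permutes[OF T]) simp
  then show "L g permutes {0..<2} \<times> T" using g .
  show W: "W permutes {0..<2} \<times> T" unfolding W_def by (intro skew_product_permutes[OF T]) simp
  have cases: "\<exists>t\<in>T. x = (0, t) \<or> x = (1, t)" if "x \<in> {0..<2::nat} \<times> T" for x
    using that less_2_cases_iff by auto
  have W_apply: "W (i, t) = (1 - i, t)" if "i < 2" "t \<in> T" for i t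
  proof -
    have "(i + 1) mod 2 = 1 - i" using that(1) less_2_cases_iff[of i] by auto
    then show ?thesis using that by (simp add: W_def)
  qed
  have g'T: "g' t \<in> T" if "t \<in> T" for t using that g' by (simp add: permutes_in_image)
  show "L g \<circ> W \<circ> (L g' \<circ> W) = skew_product 2 0 (\<lambda>i. if i = 0 then g else g') T"
  proof (rule permutes_eqI)
    show "L g \<circ> W \<circ> (L g' \<circ> W) permutes {0..<2} \<times> T"
      using L g g' W by (simp add: permutes_compose)
    show "skew_product 2 0 (\<lambda>i. if i = 0 then g else g') T permutes {0..<2} \<times> T"
      using g g' by (intro skew_product_permutes[OF T]) simp
    show "(L g \<circ> W \<circ> (L g' \<circ> W)) x = skew_product 2 0 (\<lambda>i. if i = 0 then g else g') T x"
      if "x \<in> {0..<2} \<times> T" for x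
      using cases[OF that] g'T by (auto simp: L_def W_apply)
  qed
  show "(W \<circ> L g \<circ> (L g' \<circ> W)) x = x"
    if "\<And>t. t \<in> T \<Longrightarrow> g (g' t) = t" "x \<in> {0..<2} \<times> T"
    using cases[OF that(2)] that(1) g'T by (auto simp: L_def W_apply)
qed

lemma semiregular_commutator_gadget:
  fixes C :: "'c set"
  assumes C: "finite C" and d: "0 < d"
  defines "S \<equiv> {0..<2::nat} \<times> ({0..<d} \<times> C)"
  obtains As where "\<And>j. j < 3 \<Longrightarrow> As j permutes S" "\<And>x. x \<in> S \<Longrightarrow> perm_prod As 3 x = x"
    "semiregular d (As 1 \<circ> As 2 \<circ> As 0) S"
proof -
  let ?T = "{0..<d} \<times> C"
  have T: "finite ?T" using C by simp
  let ?\<rho> = "skew_product d 1 (\<lambda>_. id) C"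
  let ?\<rho>' = "?\<rho> ^^ (d - 1)"
  have \<rho>: "semiregular d ?\<rho> ?T" by (rule semiregular_skew_rotation[OF C d]) simp
  have \<rho>': "semiregular d ?\<rho>' ?T" by (rule semiregular_funpow[OF \<rho> coprime_diff_one_left_nat[OF d]])
  note commutator = layer_swap_commutator[OF T semiregular_permutes[OF \<rho>] semiregular_permutes[OF \<rho>']]
  let ?L = "\<lambda>h. skew_product 2 0 (\<lambda>i::nat. if i = 0 then h else id) ?T"
  let ?W = "skew_product 2 1 (\<lambda>_. id) ?T"
  define As where "As j = (if j = 0 then ?L ?\<rho>' \<circ> ?W else if j = 1 then ?L ?\<rho> else ?W)" for j :: nat
  have "As j permutes S" for j
    using commutator(1,2) layer_swap_commutator(1)[OF T semiregular_permutes[OF \<rho>'] semiregular_permutes[OF \<rho>]]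
    by (simp add: As_def S_def permutes_compose)
  moreover have "?\<rho> ^^ d = ?\<rho> \<circ> ?\<rho>'" using funpow.simps(2)[of "d - 1" ?\<rho>] d by simp
  then have "?\<rho> (?\<rho>' t) = t" if "t \<in> ?T" for t
    using semiregular_funpow_self[OF \<rho> that] by simp
  then have "perm_prod As 3 x = x" if "x \<in> S" for x
    using commutator(4) that by (simp add: perm_prod_3 As_def S_def)
  moreover have "semiregular (1 * d) (skew_product 2 0 (\<lambda>i::nat. if i = 0 then ?\<rho> else ?\<rho>') ?T) S"
    unfolding S_def using \<rho> \<rho>' semiregular_permutes[OF \<rho>] semiregular_permutes[OF \<rho>']
    by (intro semiregular_skew_product[OF T]) simp_all
  then have "semiregular d (As 1 \<circ> As 2 \<circ> As 0) S" using commutator(3) by (simp add: As_def)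
  ultimately show thesis by (rule that)
qed

lemma cycle_class_subset_square_of_family:
  fixes B :: "'b set"
  assumes B: "finite B" and n: "n = r * card B" and cf: "r = c * f" and m: "m = f * d"
    and c: "0 < c" and f: "0 < f" and d: "0 < d" and parity: "even c \<or> odd r"
    and As: "\<And>j. j < c \<Longrightarrow> semiregular d (As j) B" and prod: "\<And>b. b \<in> B \<Longrightarrow> perm_prod As c b = b"
  shows "cycle_class n m \<subseteq> set_square (cycle_class n r)"
proof -
  have r: "0 < r" using cf c f by simp
  obtain a e where a: "coprime a r" and e: "coprime e r" and ae: "[a + e = c] (mod r)"
    using sum_of_two_units[OF r parity] .
  obtain e' where inv: "[e * e' = 1] (mod r)" using cong_solve_coprime_nat[OF e] by auto
  let ?\<psi> = "spread r e' c As"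
  have \<psi>: "?\<psi> i permutes B" for i by (rule spread_permutes) (rule semiregular_permutes[OF As])
  show ?thesis
  proof (rule cycle_class_subset_square_of_model)
    show "finite ({0..<r} \<times> B)" "card ({0..<r} \<times> B) = n" "0 < m" "0 < r"
      using B n m f d r by (simp_all add: card_cartesian_product)
    show "semiregular r (skew_product r a (\<lambda>_. id) B) ({0..<r} \<times> B)"
      by (rule semiregular_skew_rotation[OF B r a])
    show "semiregular r (skew_product r e ?\<psi> B) ({0..<r} \<times> B)"
      using cf f semiregular_permutes[OF As] prod
      by (intro semiregular_skew_spread_unit[OF B r inv]) simp_all
    have "skew_product r a (\<lambda>_. id) B \<circ> skew_product r e ?\<psi> B = skew_product r c ?\<psi> B"
      by (rule skew_rotation_comp[OF \<psi> ae])
    then show "semiregular m (skew_product r a (\<lambda>_. id) B \<circ> skew_product r e ?\<psi> B) ({0..<r} \<times> B)"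
      using semiregular_skew_spread[OF B cf c f inv As] m by simp
  qed
qed

lemma cycle_class_subset_square_of_commutator:
  fixes B :: "'b set"
  assumes B: "finite B" and n: "n = r * card B" and m: "m = r * d" and d: "0 < d"
    and r: "3 \<le> r" "odd r" and As: "\<And>j. j < 3 \<Longrightarrow> As j permutes B"
    and prod: "\<And>b. b \<in> B \<Longrightarrow> perm_prod As 3 b = b" and comm: "semiregular d (As 1 \<circ> As 2 \<circ> As 0) B"
  shows "cycle_class n m \<subseteq> set_square (cycle_class n r)"
proof -
  have r0: "0 < r" using r by simp
  let ?\<psi> = "spread r (r - 1) 3 As"
  have \<psi>: "?\<psi> i permutes B" for i by (rule spread_permutes[OF As])
  define s where "s = r - 2"
  have "r = s + 2" using r by (simp add: s_def)
  then have "(r - 1) * (r - 1) = r * s + 1" by (simp add: algebra_simps)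
  then have inv: "[(r - 1) * (r - 1) = 1] (mod r)" by (simp only: cong_def mod_mult_self4)
  have "2 + (r - 1) = r + 1" using r by simp
  then have sum: "[2 + (r - 1) = 1] (mod r)" by (simp only: cong_def mod_add_self1)
  show ?thesis
  proof (rule cycle_class_subset_square_of_model)
    show "finite ({0..<r} \<times> B)" "card ({0..<r} \<times> B) = n" "0 < m" "0 < r"
      using B n m d r0 by (simp_all add: card_cartesian_product)
    show "semiregular r (skew_product r 2 (\<lambda>_. id) B) ({0..<r} \<times> B)"
      using r by (intro semiregular_skew_rotation[OF B r0]) simp
    show "semiregular r (skew_product r (r - 1) ?\<psi> B) ({0..<r} \<times> B)"
      by (rule semiregular_skew_spread_unit[OF B r0 inv r(1) As prod])
    have "skew_product r 2 (\<lambda>_. id) B \<circ> skew_product r (r - 1) ?\<psi> B = skew_product r 1 ?\<psi> B"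
      by (rule skew_rotation_comp[OF \<psi> sum])
    then show "semiregular m (skew_product r 2 (\<lambda>_. id) B \<circ> skew_product r (r - 1) ?\<psi> B) ({0..<r} \<times> B)"
      using semiregular_skew_spread_three[OF B r(1) As comm] m by simp
  qed
qed

lemma cycle_class_subset_square_even:
  assumes cf: "r = c * f" and m: "m = f * d" and n: "n = r * (d * q)"
    and c: "0 < c" and f: "0 < f" and d: "0 < d" and even: "even c"
  shows "cycle_class n m \<subseteq> set_square (cycle_class n r)"
proof -
  let ?B = "{0..<d} \<times> {0..<q::nat}"
  have "semiregular d (skew_product d 1 (\<lambda>_. id) {0..<q}) ?B"
    by (rule semiregular_skew_rotation[OF _ d]) simp_all
  then obtain As where As: "\<And>j. j < c \<Longrightarrow> semiregular d (As j) ?B"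
    and prod: "\<And>b. b \<in> ?B \<Longrightarrow> perm_prod As c b = b"
    using trivial_product_pad[OF d, of _ ?B 0 c "\<lambda>_. id"] even by auto
  have B: "finite ?B" "n = r * card ?B" using n by (simp_all add: card_cartesian_product)
  show ?thesis
    using even by (intro cycle_class_subset_square_of_family[OF B cf m c f d _ As prod]) simp
qed

lemma cycle_class_subset_square_odd:
  assumes cf: "r = c * f" and m: "m = f * d" and n: "n = r * (d * (2 * q))"
    and c: "3 \<le> c" and f: "0 < f" and d: "0 < d" and odd: "odd r"
  shows "cycle_class n m \<subseteq> set_square (cycle_class n r)"
proof -
  let ?B = "{0..<d} \<times> ({0..<2::nat} \<times> {0..<q::nat})"
  obtain T where T: "\<And>j. j < 3 \<Longrightarrow> semiregular d (T j) ?B" and TP: "\<And>b. b \<in> ?B \<Longrightarrow> perm_prod T 3 b = b"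
    using three_semiregular_trivial_product[of "{0..<q}" d] d by auto
  have "even (c - 3)" using odd cf c by auto
  then obtain As where As: "\<And>j. j < c \<Longrightarrow> semiregular d (As j) ?B"
    and prod: "\<And>b. b \<in> ?B \<Longrightarrow> perm_prod As c b = b"
    using trivial_product_pad[OF d T[of 0] c _ T TP] by auto
  have B: "finite ?B" "n = r * card ?B" using n by (simp_all add: card_cartesian_product)
  show ?thesis
    using c odd by (intro cycle_class_subset_square_of_family[OF B cf m _ f d _ As prod]) simp_all
qed

lemma cycle_class_subset_square_dvd:
  assumes m: "m = r * d" and n: "n = r * (2 * (d * q))" and d: "0 < d" and r: "3 \<le> r" "odd r"
  shows "cycle_class n m \<subseteq> set_square (cycle_class n r)"
proof -
  let ?B = "{0..<2::nat} \<times> ({0..<d} \<times> {0..<q::nat})"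
  obtain As where As: "\<And>j. j < 3 \<Longrightarrow> As j permutes ?B"
    and prod: "\<And>b. b \<in> ?B \<Longrightarrow> perm_prod As 3 b = b" and comm: "semiregular d (As 1 \<circ> As 2 \<circ> As 0) ?B"
    using semiregular_commutator_gadget[of "{0..<q}" d] d by auto
  have B: "finite ?B" "n = r * card ?B" using n by (simp_all add: card_cartesian_product)
  show ?thesis by (rule cycle_class_subset_square_of_commutator[OF B m d r As prod comm])
qed

lemma common_multiple_cofactors:
  fixes n r m :: nat
  assumes r: "0 < r" and m: "0 < m" and rn: "r dvd n" and mn: "m dvd n" and nm: "even (n div m)"
  obtains c0 d0 s where "r = c0 * gcd r m" "m = d0 * gcd r m" "n = r * s" "0 < c0" "0 < d0"
    "d0 dvd s" "odd c0 \<Longrightarrow> 2 * d0 dvd s"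
proof -
  obtain s where ns: "n = r * s" using rn ..
  obtain u where "n div m = 2 * u" using nm ..
  then have nmu: "n = m * (2 * u)" using mn by (metis dvd_mult_div_cancel)
  let ?g = "gcd r m"
  obtain c0 d0 where rc: "r = c0 * ?g" and md: "m = d0 * ?g" and cop: "coprime c0 d0"
    using gcd_coprime_exists[of r m] r by auto
  have "0 < c0" "0 < d0" using rc md r m by (auto intro: Nat.gr0I)
  moreover have "(c0 * s) * ?g = (d0 * (2 * u)) * ?g" using rc md ns nmu by (metis mult.commute mult.left_commute)
  then have key: "c0 * s = d0 * (2 * u)" using r by simp
  then have "d0 dvd s" using cop by (metis coprime_commute coprime_dvd_mult_right_iff dvd_triv_left)
  moreover have "2 * d0 dvd s" if "odd c0"
  proof -
    have "coprime (2 * d0) c0" using that cop by (simp add: coprime_commute)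
    moreover have "2 * d0 dvd c0 * s" using key by (simp add: ac_simps)
    ultimately show ?thesis by (simp add: coprime_dvd_mult_right_iff)
  qed
  ultimately show thesis using that rc md ns by blast
qed

lemma divisor_cases:
  fixes n r m :: nat
  assumes r: "1 < r" and m: "0 < m" and rn: "r dvd n" and mn: "m dvd n" and nm: "even (n div m)"
  obtains (even) c f d q where "r = c * f" "m = f * d" "n = r * (d * q)" "0 < c" "0 < f" "0 < d" "even c"
  | (odd) c f d q where "r = c * f" "m = f * d" "n = r * (d * (2 * q))" "3 \<le> c" "0 < f" "0 < d" "odd r"
  | (dvd) d q where "m = r * d" "n = r * (2 * (d * q))" "0 < d" "3 \<le> r" "odd r"
proof -
  let ?g = "gcd r m"
  have g: "0 < ?g" using r by simp
  obtain c0 d0 s where rc: "r = c0 * ?g" and md: "m = d0 * ?g" and ns: "n = r * s"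
    and c0: "0 < c0" and d0: "0 < d0" and s: "d0 dvd s" "odd c0 \<Longrightarrow> 2 * d0 dvd s"
    using common_multiple_cofactors[OF _ m rn mn nm] r by auto
  show thesis
  proof (cases "even c0")
    case True
    obtain q where "s = d0 * q" using s(1) ..
    then show thesis using even[of c0 ?g d0 q] rc md ns c0 g d0 True by (simp add: ac_simps)
  next
    case False
    obtain q where q: "s = 2 * d0 * q" using s(2)[OF False] ..
    have "c0 = 1 \<or> 3 \<le> c0" using False c0 by presburger
    then consider "even r" | "odd r" "c0 = 1" | "odd r" "3 \<le> c0" by blast
    then show thesis
    proof cases
      case 1
      then obtain f where "?g = 2 * f" using False rc by (metis even_mult_iff evenE)
      then show thesis
        using even[of "2 * c0" f "2 * d0" q] rc md ns q c0 d0 g by (simp add: ac_simps)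
    next
      case 2
      moreover have "3 \<le> r" using 2 r by presburger
      ultimately show thesis using dvd[of d0 q] rc md ns q d0 by (simp add: ac_simps)
    next
      case 3
      then show thesis using odd[of c0 ?g d0 q] rc md ns q d0 g by (simp add: ac_simps)
    qed
  qed
qed

theorem lemma6p3:
  shows "\<exists>n0::nat. \<forall>n>n0. \<forall>r m::nat. 0 < r \<and> 0 < m \<and> r dvd n \<and> m dvd n \<and> 1 < r \<and>
            even (n div m) \<longrightarrow> cycle_class n m \<subseteq> set_square (cycle_class n r)"
proof (intro exI allI impI)
  fix n r m :: nat
  assume "0 < r \<and> 0 < m \<and> r dvd n \<and> m dvd n \<and> 1 < r \<and> even (n div m)"
  then have "1 < r" "0 < m" "r dvd n" "m dvd n" "even (n div m)" by auto
  then show "cycle_class n m \<subseteq> set_square (cycle_class n r)"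
  proof (cases rule: divisor_cases)
    case even
    then show ?thesis by (rule cycle_class_subset_square_even)
  next
    case odd
    then show ?thesis by (rule cycle_class_subset_square_odd)
  next
    case dvd
    then show ?thesis by (rule cycle_class_subset_square_dvd)
  qed
qed

end
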